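(* For every integer $n\geq 1$, $Q_{2n}$ has a DVOP$[n]$ whose edge set is all of $E(Q_{2n})$.
   Context: $Q_q$ denotes the $q$-dimensional hypercube graph (vertices are $q$-tuples of $0$'s and $1$'s, adjacent iff they differ in exactly one coordinate). $P_k$ is the path with vertices $0,1,\dots,k$ and edges $\hat{j}$ joining $j-1$ and $j$. For a graph $G$, a DVOP$[k]$ is a family $\{p_v\}_{v\in V(G)}$ of embeddings $p_v:P_k\to G$ such that (a) $p_v(\hat{j})=p_{v'}(\hat{j'})$ implies $v=v'$ and $j=j'$, and (b) $p_v(0)=v$ for every $v$; its edge set is the union of the edge images of all $p_v$. *)

theory Defs
  imports Main
begin

definition hc_verts :: "nat \<Rightarrow> bool list set" where
  "hc_verts q = {xs. length xs = q}"

definition hc_adj :: "nat \<Rightarrow> bool list \<Rightarrow> bool list \<Rightarrow> bool" where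
  "hc_adj q u v \<longleftrightarrow> u \<in> hc_verts q \<and> v \<in> hc_verts q \<and> card {i. i < q \<and> u ! i \<noteq> v ! i} = 1"

definition graph_edges :: "'a set \<Rightarrow> ('a \<Rightarrow> 'a \<Rightarrow> bool) \<Rightarrow> 'a set set" where
  "graph_edges V adj = {{u, v} | u v. u \<in> V \<and> v \<in> V \<and> adj u v}"

(* embedding of the path P_k (vertices 0..k, edge j joins j-1 and j) into (V, adj):
   an injective map on vertices sending edges to edges *)
definition path_embedding :: "'a set \<Rightarrow> ('a \<Rightarrow> 'a \<Rightarrow> bool) \<Rightarrow> nat \<Rightarrow> (nat \<Rightarrow> 'a) \<Rightarrow> bool" where
  "path_embedding V adj k f \<longleftrightarrow>
     inj_on f {0..k} \<and> (\<forall>j\<in>{0..k}. f j \<in> V) \<and> (\<forall>j\<in>{1..k}. adj (f (j - 1)) (f j))"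

definition edge_img :: "(nat \<Rightarrow> 'a) \<Rightarrow> nat \<Rightarrow> 'a set" where
  "edge_img f j = {f (j - 1), f j}"

definition is_DVOP :: "'a set \<Rightarrow> ('a \<Rightarrow> 'a \<Rightarrow> bool) \<Rightarrow> nat \<Rightarrow> ('a \<Rightarrow> nat \<Rightarrow> 'a) \<Rightarrow> bool" where
  "is_DVOP V adj k p \<longleftrightarrow>
     (\<forall>v\<in>V. path_embedding V adj k (p v) \<and> p v 0 = v) \<and>
     (\<forall>v\<in>V. \<forall>v'\<in>V. \<forall>j\<in>{1..k}. \<forall>j'\<in>{1..k}.
        edge_img (p v) j = edge_img (p v') j' \<longrightarrow> v = v' \<and> j = j')"

definition DVOP_edges :: "'a set \<Rightarrow> nat \<Rightarrow> ('a \<Rightarrow> nat \<Rightarrow> 'a) \<Rightarrow> 'a set set" where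
  "DVOP_edges V k p = {edge_img (p v) j | v j. v \<in> V \<and> j \<in> {1..k}}"

end

theory Submission
  imports Defs
begin

text \<open>Group the 2n coordinates into n pairs. On the pair (2k, 2k+1) the four states of Q_2 form
  the square 00, 01, 11, 10, and the quarter turn (a, b) \<mapsto> (b, \<not> a) moves each state to the next
  one by flipping a single coordinate. The path from v applies the quarter turn of pair 0, then that
  of pair 1, and so on. Each turn permutes the vertices, so at every time k the current positions of
  all paths run through every vertex exactly once; hence step k + 1 uses each edge {w, turn_k w}
  exactly once, and these are all the edges in directions 2k and 2k+1, since each edge of the square
  is traversed in one orientation only. A path is injective because pair k is moved at step k + 1
  and never again.\<close>

primrec walk :: "(nat \<Rightarrow> 'a \<Rightarrow> 'a) \<Rightarrow> 'a \<Rightarrow> nat \<Rightarrow> 'a" where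
  "walk s v 0 = v"
| "walk s v (Suc j) = s j (walk s v j)"

lemma edge_img_walk_Suc: "edge_img (walk s v) (Suc k) = {walk s v k, s k (walk s v k)}"
  by (simp add: edge_img_def)

lemma bij_betw_walk:
  assumes "\<And>k. k < n \<Longrightarrow> bij_betw (s k) V V" and "j \<le> n"
  shows "bij_betw (\<lambda>v. walk s v j) V V"
  using assms(2)
proof (induction j)
  case 0
  then show ?case by (simp add: bij_betw_id[unfolded id_def])
next
  case (Suc j)
  have "bij_betw (s j \<circ> (\<lambda>v. walk s v j)) V V"
    using Suc assms(1) by (intro bij_betw_trans) auto
  then show ?case by (simp add: comp_def)
qed

lemma walk_in:
  assumes "\<And>k. k < n \<Longrightarrow> bij_betw (s k) V V" and "v \<in> V" and "j \<le> n"
  shows "walk s v j \<in> V"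
  using bij_betw_apply[OF bij_betw_walk[OF assms(1,3)] assms(2)] .

lemma is_DVOP_walk:
  assumes bij: "\<And>k. k < n \<Longrightarrow> bij_betw (s k) V V"
    and adj: "\<And>k a. k < n \<Longrightarrow> a \<in> V \<Longrightarrow> adj a (s k a)"
    and inj: "\<And>v. v \<in> V \<Longrightarrow> inj_on (walk s v) {0..n}"
    and edges_distinct: "\<And>k k' a a'. k < n \<Longrightarrow> k' < n \<Longrightarrow> a \<in> V \<Longrightarrow> a' \<in> V \<Longrightarrow>
      {a, s k a} = {a', s k' a'} \<Longrightarrow> k = k' \<and> a = a'"
  shows "is_DVOP V adj n (walk s)"
  unfolding is_DVOP_def
proof (intro conjI ballI impI)
  fix v assume v: "v \<in> V"
  show "walk s v 0 = v" by simp
  show "path_embedding V adj n (walk s v)"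
    unfolding path_embedding_def
  proof (intro conjI ballI)
    show "inj_on (walk s v) {0..n}" using inj v .
    show "walk s v j \<in> V" if "j \<in> {0..n}" for j
      using walk_in[of n s V, OF bij v] that by simp
    fix j assume "j \<in> {1..n}"
    then obtain k where "j = Suc k" "k < n" by (cases j) auto
    then show "adj (walk s v (j - 1)) (walk s v j)"
      using adj walk_in[of n s V, OF bij v, of k] by simp
  qed
next
  fix v v' j j' assume v: "v \<in> V" and v': "v' \<in> V" and "j \<in> {1..n}" "j' \<in> {1..n}"
    and eq: "edge_img (walk s v) j = edge_img (walk s v') j'"
  obtain k k' where k: "j = Suc k" "k < n" and k': "j' = Suc k'" "k' < n"
    using \<open>j \<in> {1..n}\<close> \<open>j' \<in> {1..n}\<close> by (cases j; cases j') auto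
  have "{walk s v k, s k (walk s v k)} = {walk s v' k', s k' (walk s v' k')}"
    using eq unfolding k k' edge_img_walk_Suc .
  then have kk: "k = k'" and same_head: "walk s v k = walk s v' k"
    using edges_distinct[OF k(2) k'(2) walk_in[of n s V, OF bij v, of k] walk_in[of n s V, OF bij v', of k']] k k'
    by auto
  have "inj_on (\<lambda>v. walk s v k) V"
    using bij_betw_walk[of n s V k, OF bij] k(2) by (simp add: bij_betw_def)
  then show "v = v'" using inj_onD[OF _ same_head v v'] by simp
  show "j = j'" using k k' kk by simp
qed

lemma DVOP_edges_walk:
  assumes bij: "\<And>k. k < n \<Longrightarrow> bij_betw (s k) V V"
  shows "DVOP_edges V n (walk s) = {{a, s k a} | a k. a \<in> V \<and> k < n}"
proof (intro equalityI subsetI)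
  fix e assume "e \<in> DVOP_edges V n (walk s)"
  then obtain v j where e: "e = edge_img (walk s v) j" and v: "v \<in> V" and "j \<in> {1..n}"
    unfolding DVOP_edges_def by blast
  then obtain k where k: "j = Suc k" "k < n" by (cases j) auto
  have "e = {walk s v k, s k (walk s v k)}" unfolding e k edge_img_walk_Suc ..
  with walk_in[of n s V, OF bij v, of k] k(2) show "e \<in> {{a, s k a} | a k. a \<in> V \<and> k < n}"
    by auto
next
  fix e assume "e \<in> {{a, s k a} | a k. a \<in> V \<and> k < n}"
  then obtain a k where e: "e = {a, s k a}" and a: "a \<in> V" and k: "k < n" by blast
  have "a \<in> (\<lambda>v. walk s v k) ` V"
    using bij_betw_walk[of n s V k, OF bij] k a by (simp add: bij_betw_def)
  then obtain v where v: "v \<in> V" and "walk s v k = a" by blast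
  then have "e = edge_img (walk s v) (Suc k)" unfolding e edge_img_walk_Suc by simp
  with v k show "e \<in> DVOP_edges V n (walk s)"
    unfolding DVOP_edges_def by fastforce
qed

definition flip :: "nat \<Rightarrow> bool list \<Rightarrow> bool list" where
  "flip c w = w[c := \<not> w ! c]"

lemma length_flip [simp]: "length (flip c w) = length w"
  by (simp add: flip_def)

lemma nth_flip: "c < length w \<Longrightarrow> flip c w ! i = (if i = c then \<not> w ! i else w ! i)"
  by (simp add: flip_def nth_list_update)

lemma flip_flip [simp]: "flip c (flip c w) = w"
  by (cases "c < length w") (simp_all add: flip_def list_update_beyond)

lemma flip_eq_flip_iff:
  assumes "c < length w" "d < length w"
  shows "flip c w = flip d w \<longleftrightarrow> c = d"
proof
  assume "flip c w = flip d w"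
  then have "flip c w ! c = flip d w ! c" by simp
  then show "c = d" using assms by (auto simp: nth_flip split: if_splits)
qed simp

lemma hc_adj_iff_flip: "hc_adj q u v \<longleftrightarrow> length u = q \<and> (\<exists>c<q. v = flip c u)"
proof
  assume "hc_adj q u v"
  then have lengths: "length u = q" "length v = q"
    and "card {i. i < q \<and> u ! i \<noteq> v ! i} = 1"
    by (auto simp: hc_adj_def hc_verts_def)
  then obtain c where c: "{i. i < q \<and> u ! i \<noteq> v ! i} = {c}"
    by (auto simp: card_Suc_eq)
  then have "c < q" by blast
  have "v ! i = flip c u ! i" if "i < q" for i
    using c that \<open>c < q\<close> lengths(1) by (auto simp: nth_flip)
  then have "v = flip c u"
    using lengths by (intro nth_equalityI) simp_all
  with \<open>c < q\<close> lengths show "length u = q \<and> (\<exists>c<q. v = flip c u)" by auto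
next
  assume "length u = q \<and> (\<exists>c<q. v = flip c u)"
  then obtain c where "length u = q" "c < q" "v = flip c u" by blast
  then have "{i. i < q \<and> u ! i \<noteq> v ! i} = {c}" by (auto simp: nth_flip)
  with \<open>length u = q\<close> \<open>v = flip c u\<close> show "hc_adj q u v"
    by (simp add: hc_adj_def hc_verts_def)
qed

lemma graph_edges_hc:
  "graph_edges (hc_verts q) (hc_adj q) = {{u, flip c u} | u c. length u = q \<and> c < q}"
proof -
  have "graph_edges (hc_verts q) (hc_adj q) = {{u, v} | u v. hc_adj q u v}"
    unfolding graph_edges_def hc_adj_def by blast
  also have "\<dots> = {{u, flip c u} | u c. length u = q \<and> c < q}"
    unfolding hc_adj_iff_flip by blast
  finally show ?thesis .
qed

lemma flip_edge_eq_imp_coord_eq: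
  assumes "c < length a" "c' < length a"
    and "{a, flip c a} = {a', flip c' a'}"
  shows "c = c'"
proof -
  from assms(3) consider "a' = a" "flip c a = flip c' a'" | "a = flip c' a'" "a' = flip c a"
    unfolding doubleton_eq_iff by auto
  then have "flip c a = flip c' a"
  proof cases
    case 2
    have "flip c' a = a'" using 2(1) by simp
    with 2(2) show ?thesis by simp
  qed simp
  then show ?thesis using flip_eq_flip_iff[OF assms(1,2)] by blast
qed

definition pair_turn_coord :: "nat \<Rightarrow> bool list \<Rightarrow> nat" where
  "pair_turn_coord k w = (if w ! (2*k) = w ! Suc (2*k) then Suc (2*k) else 2*k)"

definition pair_turn :: "nat \<Rightarrow> bool list \<Rightarrow> bool list" where
  "pair_turn k w = flip (pair_turn_coord k w) w"

lemma pair_turn_coord_div_2 [simp]: "pair_turn_coord k w div 2 = k"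
  by (simp add: pair_turn_coord_def)

lemma pair_turn_coord_less: "Suc (2*k) < q \<Longrightarrow> pair_turn_coord k w < q"
  by (simp add: pair_turn_coord_def)

lemma length_pair_turn [simp]: "length (pair_turn k w) = length w"
  by (simp add: pair_turn_def)

lemma nth_pair_turn_other:
  assumes "i div 2 \<noteq> k"
  shows "pair_turn k w ! i = w ! i"
proof -
  have "i \<noteq> pair_turn_coord k w" using assms by auto
  then show ?thesis by (simp add: pair_turn_def flip_def)
qed

lemma nth_pair_turn_coord:
  "Suc (2*k) < length w \<Longrightarrow> pair_turn k w ! pair_turn_coord k w = (\<not> w ! pair_turn_coord k w)"
  by (simp add: pair_turn_def nth_flip pair_turn_coord_less)

lemma nth_pair_turn_pair:
  assumes "Suc (2*k) < length w"
  shows "pair_turn k w ! (2*k) = w ! Suc (2*k)" "pair_turn k w ! Suc (2*k) = (\<not> w ! (2*k))"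
  using assms by (auto simp: pair_turn_def pair_turn_coord_def nth_flip)

lemma pair_turn_four_times:
  assumes "Suc (2*k) < length w"
  shows "pair_turn k (pair_turn k (pair_turn k (pair_turn k w))) = w"
proof (rule nth_equalityI)
  fix i assume "i < length (pair_turn k (pair_turn k (pair_turn k (pair_turn k w))))"
  then consider "i = 2*k" | "i = Suc (2*k)" | "i div 2 \<noteq> k" by linarith
  then show "pair_turn k (pair_turn k (pair_turn k (pair_turn k w))) ! i = w ! i"
    by cases (simp_all add: assms nth_pair_turn_pair nth_pair_turn_other)
qed simp

lemma pair_turn_twice_neq:
  assumes "Suc (2*k) < length w"
  shows "pair_turn k (pair_turn k w) \<noteq> w"
proof
  assume "pair_turn k (pair_turn k w) = w"
  then have "pair_turn k (pair_turn k w) ! (2*k) = w ! (2*k)" by simp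
  then show False using assms by (simp add: nth_pair_turn_pair)
qed

lemma bij_betw_pair_turn:
  assumes "Suc (2*k) < q"
  shows "bij_betw (pair_turn k) (hc_verts q) (hc_verts q)"
  by (rule bij_betw_byWitness[where f' = "\<lambda>w. pair_turn k (pair_turn k (pair_turn k w))"])
     (use assms pair_turn_four_times in \<open>auto simp: hc_verts_def\<close>)

lemma hc_adj_pair_turn: "Suc (2*k) < q \<Longrightarrow> w \<in> hc_verts q \<Longrightarrow> hc_adj q w (pair_turn k w)"
  unfolding hc_adj_iff_flip hc_verts_def pair_turn_def
  by (auto intro!: exI[of _ "pair_turn_coord k w"] pair_turn_coord_less)

lemma pair_turn_edge_eq:
  assumes "a \<in> hc_verts q" "a' \<in> hc_verts q" "Suc (2*k) < q" "Suc (2*k') < q"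
    and edge: "{a, pair_turn k a} = {a', pair_turn k' a'}"
  shows "k = k' \<and> a = a'"
proof
  have "pair_turn_coord k a = pair_turn_coord k' a'"
    using edge assms(1-4) unfolding pair_turn_def
    by (intro flip_edge_eq_imp_coord_eq[where a = a and a' = a'])
      (simp_all add: hc_verts_def pair_turn_coord_less)
  then show "k = k'" by (metis pair_turn_coord_div_2)
  show "a = a'"
  proof (rule ccontr)
    assume "a \<noteq> a'"
    with edge have "a = pair_turn k' a'" "a' = pair_turn k a" by (auto simp: doubleton_eq_iff)
    then have "pair_turn k (pair_turn k a) = a" using \<open>k = k'\<close> by simp
    then show False using pair_turn_twice_neq assms(1,3) by (simp add: hc_verts_def)
  qed
qed

lemma flip_edge_eq_pair_turn_edge:
  assumes "Suc (2*k) < length u" "c div 2 = k"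
  shows "\<exists>w. length w = length u \<and> {u, flip c u} = {w, pair_turn k w}"
proof (cases "pair_turn_coord k u = c")
  case True
  then show ?thesis by (auto simp: pair_turn_def)
next
  case False
  from assms(2) have "c = 2*k \<or> c = Suc (2*k)" by presburger
  then have "pair_turn_coord k (flip c u) = c"
    using False assms(1) by (auto simp: pair_turn_coord_def nth_flip)
  then have "{u, flip c u} = {flip c u, pair_turn k (flip c u)}"
    by (auto simp: pair_turn_def)
  then show ?thesis by (intro exI[of _ "flip c u"]) simp
qed

lemma length_walk_pair_turn [simp]: "length (walk pair_turn v j) = length v"
  by (induction j) simp_all

lemma nth_walk_pair_turn_stable:
  assumes "j \<le> m" "c < 2*j"
  shows "walk pair_turn v m ! c = walk pair_turn v j ! c"
  using assms(1)
proof (induction m rule: dec_induct)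
  case (step m)
  then have "c div 2 \<noteq> m" using assms(2) by linarith
  with step show ?case by (simp add: nth_pair_turn_other)
qed simp

lemma inj_on_walk_pair_turn:
  assumes "length v = 2*n"
  shows "inj_on (walk pair_turn v) {0..n}"
proof (rule linorder_inj_onI')
  fix j j' assume "j \<in> {0..n}" "j' \<in> {0..n}" "j < j'"
  let ?c = "pair_turn_coord j (walk pair_turn v j)"
  have "Suc (2*j) < length (walk pair_turn v j)"
    using assms \<open>j < j'\<close> \<open>j' \<in> {0..n}\<close> by simp
  then have "walk pair_turn v (Suc j) ! ?c = (\<not> walk pair_turn v j ! ?c)"
    by (simp add: nth_pair_turn_coord)
  moreover have "walk pair_turn v j' ! ?c = walk pair_turn v (Suc j) ! ?c"
    using \<open>j < j'\<close> by (intro nth_walk_pair_turn_stable) (auto simp: pair_turn_coord_def)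
  ultimately show "walk pair_turn v j \<noteq> walk pair_turn v j'" by force
qed

lemma pair_turn_edges_eq_hc_edges:
  "{{a, pair_turn k a} | a k. a \<in> hc_verts (2*n) \<and> k < n}
     = graph_edges (hc_verts (2*n)) (hc_adj (2*n))"
proof (intro equalityI subsetI)
  fix e assume "e \<in> {{a, pair_turn k a} | a k. a \<in> hc_verts (2*n) \<and> k < n}"
  then obtain a k where e: "e = {a, pair_turn k a}" and a: "a \<in> hc_verts (2*n)" and "k < n"
    by blast
  then have "hc_adj (2*n) a (pair_turn k a)" "pair_turn k a \<in> hc_verts (2*n)"
    by (auto intro: hc_adj_pair_turn simp: hc_verts_def)
  with e a show "e \<in> graph_edges (hc_verts (2*n)) (hc_adj (2*n))"
    unfolding graph_edges_def by blast
next
  fix e assume "e \<in> graph_edges (hc_verts (2*n)) (hc_adj (2*n))"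
  then obtain u c where e: "e = {u, flip c u}" and u: "length u = 2*n" and "c < 2*n"
    unfolding graph_edges_hc by blast
  then have "c div 2 < n" "Suc (2 * (c div 2)) < length u" by presburger+
  moreover obtain w where "length w = 2*n" "e = {w, pair_turn (c div 2) w}"
    using flip_edge_eq_pair_turn_edge[OF \<open>Suc (2 * (c div 2)) < length u\<close>] e u by auto
  ultimately show "e \<in> {{a, pair_turn k a} | a k. a \<in> hc_verts (2*n) \<and> k < n}"
    unfolding hc_verts_def by blast
qed

theorem lemma8:
  fixes n :: nat
  assumes "n \<ge> 1"
  shows "\<exists>p. is_DVOP (hc_verts (2*n)) (hc_adj (2*n)) n p \<and>
             DVOP_edges (hc_verts (2*n)) n p = graph_edges (hc_verts (2*n)) (hc_adj (2*n))"
proof (intro exI conjI)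
  have bij: "bij_betw (pair_turn k) (hc_verts (2*n)) (hc_verts (2*n))" if "k < n" for k
    using that by (intro bij_betw_pair_turn) simp
  show "is_DVOP (hc_verts (2*n)) (hc_adj (2*n)) n (walk pair_turn)"
  proof (rule is_DVOP_walk[where s = pair_turn, OF bij])
    show "hc_adj (2*n) a (pair_turn k a)" if "k < n" "a \<in> hc_verts (2*n)" for k a
      using that by (intro hc_adj_pair_turn) simp_all
    show "inj_on (walk pair_turn v) {0..n}" if "v \<in> hc_verts (2*n)" for v
      using that by (intro inj_on_walk_pair_turn) (simp add: hc_verts_def)
    show "k = k' \<and> a = a'"
      if "k < n" "k' < n" "a \<in> hc_verts (2*n)" "a' \<in> hc_verts (2*n)"
        "{a, pair_turn k a} = {a', pair_turn k' a'}" for k k' a a'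
      using that by (intro pair_turn_edge_eq[of a "2*n" a']) simp_all
  qed
  show "DVOP_edges (hc_verts (2*n)) n (walk pair_turn)
          = graph_edges (hc_verts (2*n)) (hc_adj (2*n))"
    using DVOP_edges_walk[where s = pair_turn, OF bij] pair_turn_edges_eq_hc_edges by simp
qed

end
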